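(* For every term $M$ of the CCV $\lambda\mu$-calculus, $[\![M]\!]^{-1}=_{ccv}M$.
   Context: CCV $\lambda\mu$-calculus. Ordinary variables $x,y,z,\dots$ and continuation variables $k,l,\dots$ are disjoint. Terms $M ::= x \mid \lambda x.M \mid MM \mid (M\ \mathsf{where}\ x:=M) \mid \mu k.J$, jumps $J ::= [k]M \mid (J\ \mathsf{where}\ x:=M)$, where $(L\ \mathsf{where}\ x:=M)$ means $\mathsf{let}\ x=M\ \mathsf{in}\ L$ ($x$ bound in $L$ only). Terms are identified up to $\alpha$-conversion and the congruence generated by (E1) $(L\ \mathsf{where}\ x:=(M\ \mathsf{where}\ y:=N))=((L\ \mathsf{where}\ x:=M)\ \mathsf{where}\ y:=N)$ if $y$ not free in $L$; (E2) $((\mu k.J)\ \mathsf{where}\ x:=M)=\mu k.(J\ \mathsf{where}\ x:=M)$ if $k$ not free in $M$; (E3) $[k](L\ \mathsf{where}\ x:=M)=([k]L\ \mathsf{where}\ x:=M)$. Values $V$: variables and $\lambda$-abstractions; $N$ a non-value. $=_{ccv}$ is the smallest congruence containing ($z$ fresh): $NM\to(zM\ \mathsf{where}\ z:=N)$; $VN\to(Vz\ \mathsf{where}\ z:=N)$; $(\lambda x.M)V\to(M\ \mathsf{where}\ x:=V)$; $(M\ \mathsf{where}\ x:=V)\to M\{V/x\}$; $(M\ \mathsf{where}\ x:=\mu k.J)\to\mu k.J\{[k]\square\mapsto[k](M\ \mathsf{where}\ x:=\square)\}$; $[l]\mu k.J\to J\{l/k\}$; $\lambda x.Vx\to V$ ($x$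 not free in $V$); $(x\ \mathsf{where}\ x:=M)\to M$; $\mu k.[k]M\to M$ ($k$ not free in $M$); the context substitution replaces recursively each subjump $[k]Q$ with $k$ free by $[k](M\ \mathsf{where}\ x:=Q)$, and $J\{l/k\}$ replaces each such $[k]Q$ by $[l]Q$. Target calculus: sorted $\lambda$-calculus $T::=\lambda k.Q\mid WW$, $Q::=KW\mid TK$, $W::=x\mid\lambda x.T$, $K::=k\mid\lambda x.Q$. CPS translation (fresh bound variables): $\langle V\rangle[K]=KV^*$; $\langle V_1V_2\rangle[K]=V_1^*V_2^*K$; $\langle VN\rangle[K]=\langle N\rangle[\lambda y.V^*yK]$; $\langle NV\rangle[K]=\langle N\rangle[\lambda x.xV^*K]$; $\langle N_1N_2\rangle[K]=\langle N_1\rangle[\lambda x.\langle N_2\rangle[\lambda y.xyK]]$; $\langle (L\ \mathsf{where}\ x:=M)\rangle[K]=\langle M\rangle[\lambda x.\langle L\rangle[K]]$ (renaming $x$ if free in $K$); $\langle\mu k.J\rangle[K]=(\lambda k.\langle J\rangle)K$; $\langle[k]M\rangle=\langle M\rangle[k]$; $\langle (J\ \mathsf{where}\ x:=M)\rangle=\langle M\rangle[\lambda x.\langle J\rangle]$; $x^*=x$; $(\lambda x.M)^*=\lambda xk.\langle M\rangle[k]$; $[\![M]\!]=\lambda k.\langle M\rangle[k]$, computed from any syntax-tree representative. Inverse translation: $(\lambda k.Q)^{-1}=\mu k.Q^{-1}$; $(W_1W_2)^{-1}=W_1^{-1}W_2^{-1}$; $(KW)^{-1}=K^{-1}[W^{-1}]$;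 $(TK)^{-1}=K^{-1}[T^{-1}]$; $x^{-1}=x$; $(\lambda x.T)^{-1}=\lambda x.T^{-1}$; $k^{-1}=[k]\square$; $(\lambda x.Q)^{-1}=(Q^{-1}\ \mathsf{where}\ x:=\square)$, where $K^{-1}$ is a jump with one hole $\square$ and $K^{-1}[M]$ fills it with $M$. *)

theory Defs
  imports Main
begin

text \<open>Ordinary variables and continuation variables live in two disjoint index spaces.
  Lam binds ordinary index 0; Where L M (= L where x:=M) binds ordinary index 0 in L only;
  Mu binds continuation index 0.  Alpha-equivalence is syntactic identity.\<close>

datatype trm =
    Var nat
  | Lam trm
  | App trm trm
  | Where trm trm
  | Mu jmp
and jmp =
    Jmp nat trm
  | JWhere jmp trm

fun is_val :: "trm \<Rightarrow> bool" where
  "is_val (Var x) = True"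
| "is_val (Lam M) = True"
| "is_val _ = False"

primrec oshift :: "nat \<Rightarrow> trm \<Rightarrow> trm" and oshiftJ :: "nat \<Rightarrow> jmp \<Rightarrow> jmp" where
  "oshift c (Var x) = Var (if c \<le> x then Suc x else x)"
| "oshift c (Lam M) = Lam (oshift (Suc c) M)"
| "oshift c (App M N) = App (oshift c M) (oshift c N)"
| "oshift c (Where L M) = Where (oshift (Suc c) L) (oshift c M)"
| "oshift c (Mu J) = Mu (oshiftJ c J)"
| "oshiftJ c (Jmp k M) = Jmp k (oshift c M)"
| "oshiftJ c (JWhere J M) = JWhere (oshiftJ (Suc c) J) (oshift c M)"

primrec kshift :: "nat \<Rightarrow> trm \<Rightarrow> trm" and kshiftJ :: "nat \<Rightarrow> jmp \<Rightarrow> jmp" where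
  "kshift c (Var x) = Var x"
| "kshift c (Lam M) = Lam (kshift c M)"
| "kshift c (App M N) = App (kshift c M) (kshift c N)"
| "kshift c (Where L M) = Where (kshift c L) (kshift c M)"
| "kshift c (Mu J) = Mu (kshiftJ (Suc c) J)"
| "kshiftJ c (Jmp k M) = Jmp (if c \<le> k then Suc k else k) (kshift c M)"
| "kshiftJ c (JWhere J M) = JWhere (kshiftJ c J) (kshift c M)"

text \<open>Capture-avoiding substitution \<open>M{N/j}\<close> of a term for ordinary index j
  (indices above j are decremented, as the binder disappears).\<close>
primrec subst :: "nat \<Rightarrow> trm \<Rightarrow> trm \<Rightarrow> trm" and substJ :: "nat \<Rightarrow> trm \<Rightarrow> jmp \<Rightarrow> jmp" where
  "subst j N (Var x) = (if x = j then N else if j < x then Var (x - 1) else Var x)"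
| "subst j N (Lam M) = Lam (subst (Suc j) (oshift 0 N) M)"
| "subst j N (App M1 M2) = App (subst j N M1) (subst j N M2)"
| "subst j N (Where L M) = Where (subst (Suc j) (oshift 0 N) L) (subst j N M)"
| "subst j N (Mu J) = Mu (substJ j (kshift 0 N) J)"
| "substJ j N (Jmp k M) = Jmp k (subst j N M)"
| "substJ j N (JWhere J M) = JWhere (substJ (Suc j) (oshift 0 N) J) (subst j N M)"

text \<open>Renaming \<open>J{l/k}\<close>: continuation index j replaced by l (indices above j decremented).\<close>
primrec kren :: "nat \<Rightarrow> nat \<Rightarrow> trm \<Rightarrow> trm" and krenJ :: "nat \<Rightarrow> nat \<Rightarrow> jmp \<Rightarrow> jmp" where
  "kren j l (Var x) = Var x"
| "kren j l (Lam M) = Lam (kren j l M)"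
| "kren j l (App M N) = App (kren j l M) (kren j l N)"
| "kren j l (Where L M) = Where (kren j l L) (kren j l M)"
| "kren j l (Mu J) = Mu (krenJ (Suc j) (Suc l) J)"
| "krenJ j l (Jmp k M) =
     Jmp (if k = j then l else if j < k then k - 1 else k) (kren j l M)"
| "krenJ j l (JWhere J M) = JWhere (krenJ j l J) (kren j l M)"

text \<open>Context substitution \<open>J{[k]\<box> \<mapsto> [k](N where x:=\<box>)}\<close>: kk is the (current) index of k,
  N the term plugged in, living in the current context extended by x (index 0).\<close>
primrec csubst :: "nat \<Rightarrow> trm \<Rightarrow> trm \<Rightarrow> trm" and csubstJ :: "nat \<Rightarrow> trm \<Rightarrow> jmp \<Rightarrow> jmp" where
  "csubst kk N (Var x) = Var x"
| "csubst kk N (Lam M) = Lam (csubst kk (oshift 1 N) M)"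
| "csubst kk N (App M1 M2) = App (csubst kk N M1) (csubst kk N M2)"
| "csubst kk N (Where L M) = Where (csubst kk (oshift 1 N) L) (csubst kk N M)"
| "csubst kk N (Mu J) = Mu (csubstJ (Suc kk) (kshift 0 N) J)"
| "csubstJ kk N (Jmp k Q) =
     (if k = kk then Jmp k (Where N (csubst kk N Q)) else Jmp k (csubst kk N Q))"
| "csubstJ kk N (JWhere J Q) = JWhere (csubstJ kk (oshift 1 N) J) (csubst kk N Q)"

inductive ccv :: "trm \<Rightarrow> trm \<Rightarrow> bool" and ccvJ :: "jmp \<Rightarrow> jmp \<Rightarrow> bool" where
  refl: "ccv M M"
| sym: "ccv M N \<Longrightarrow> ccv N M"
| trans: "ccv M N \<Longrightarrow> ccv N P \<Longrightarrow> ccv M P"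
| reflJ: "ccvJ J J"
| symJ: "ccvJ J J' \<Longrightarrow> ccvJ J' J"
| transJ: "ccvJ J J' \<Longrightarrow> ccvJ J' J'' \<Longrightarrow> ccvJ J J''"
| cLam: "ccv M M' \<Longrightarrow> ccv (Lam M) (Lam M')"
| cApp: "ccv M M' \<Longrightarrow> ccv N N' \<Longrightarrow> ccv (App M N) (App M' N')"
| cWhere: "ccv L L' \<Longrightarrow> ccv M M' \<Longrightarrow> ccv (Where L M) (Where L' M')"
| cMu: "ccvJ J J' \<Longrightarrow> ccv (Mu J) (Mu J')"
| cJmp: "ccv M M' \<Longrightarrow> ccvJ (Jmp k M) (Jmp k M')"
| cJWhere: "ccvJ J J' \<Longrightarrow> ccv M M' \<Longrightarrow> ccvJ (JWhere J M) (JWhere J' M')"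
  \<comment> \<open>(E1), for terms and jumps; y not free in L is expressed by shifting L\<close>
| E1: "ccv (Where L (Where M N)) (Where (Where (oshift 1 L) M) N)"
| E1J: "ccvJ (JWhere J (Where M N)) (JWhere (JWhere (oshiftJ 1 J) M) N)"
  \<comment> \<open>(E2); k not free in M is expressed by shifting M\<close>
| E2: "ccv (Where (Mu J) M) (Mu (JWhere J (kshift 0 M)))"
| E3: "ccvJ (Jmp k (Where L M)) (JWhere (Jmp k L) M)"
  \<comment> \<open>reduction rules (z fresh is expressed by shifting)\<close>
| r_NM: "\<not> is_val N \<Longrightarrow> ccv (App N M) (Where (App (Var 0) (oshift 0 M)) N)"
| r_VN: "is_val V \<Longrightarrow> \<not> is_val N \<Longrightarrow> ccv (App V N) (Where (App (oshift 0 V) (Var 0)) N)"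
| r_beta: "is_val V \<Longrightarrow> ccv (App (Lam M) V) (Where M V)"
| r_whereV: "is_val V \<Longrightarrow> ccv (Where M V) (subst 0 V M)"
| r_whereMu: "ccv (Where M (Mu J)) (Mu (csubstJ 0 (kshift 0 M) J))"
| r_jmpMu: "ccvJ (Jmp l (Mu J)) (krenJ 0 l J)"
| r_eta: "is_val V \<Longrightarrow> ccv (Lam (App (oshift 0 V) (Var 0))) V"
| r_whereVar: "ccv (Where (Var 0) M) M"
| r_muJmp: "ccv (Mu (Jmp 0 (kshift 0 M))) M"


text \<open>TLam binds continuation index 0; WLam and KLam bind ordinary index 0.\<close>
datatype tT = TLam tQ | TApp tW tW
and tQ = QK tK tW | QT tT tK
and tW = WVar nat | WLam tT
and tK = KVar nat | KLam tQ

primrec oshT :: "nat \<Rightarrow> tT \<Rightarrow> tT" and oshQ :: "nat \<Rightarrow> tQ \<Rightarrow> tQ"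
  and oshW :: "nat \<Rightarrow> tW \<Rightarrow> tW" and oshK :: "nat \<Rightarrow> tK \<Rightarrow> tK" where
  "oshT c (TLam Q) = TLam (oshQ c Q)"
| "oshT c (TApp W1 W2) = TApp (oshW c W1) (oshW c W2)"
| "oshQ c (QK K W) = QK (oshK c K) (oshW c W)"
| "oshQ c (QT T K) = QT (oshT c T) (oshK c K)"
| "oshW c (WVar x) = WVar (if c \<le> x then Suc x else x)"
| "oshW c (WLam T) = WLam (oshT (Suc c) T)"
| "oshK c (KVar k) = KVar k"
| "oshK c (KLam Q) = KLam (oshQ (Suc c) Q)"

lemma size_oshift[simp]: "size (oshift c M) = size M" "size (oshiftJ c J) = size J"
  by (induction M and J arbitrary: c and c) auto

lemma size_kshift[simp]: "size (kshift c M) = size M" "size (kshiftJ c J) = size J"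
  by (induction M and J arbitrary: c and c) auto

text \<open>\<open>cps M K\<close> is \<open>\<langle>M\<rangle>[K]\<close>, \<open>cpsJ J\<close> is \<open>\<langle>J\<rangle>\<close>, \<open>star V\<close> is \<open>V\<^sup>*\<close> (only meaningful on values).\<close>
function cps :: "trm \<Rightarrow> tK \<Rightarrow> tQ" and cpsJ :: "jmp \<Rightarrow> tQ" and star :: "trm \<Rightarrow> tW" where
  "cps (Var x) K = QK K (star (Var x))"
| "cps (Lam M) K = QK K (star (Lam M))"
| "cps (App M1 M2) K =
    (if is_val M1 \<and> is_val M2 then QT (TApp (star M1) (star M2)) K
     else if is_val M1 then
       cps M2 (KLam (QT (TApp (oshW 0 (star M1)) (WVar 0)) (oshK 0 K)))
     else if is_val M2 then
       cps M1 (KLam (QT (TApp (WVar 0) (oshW 0 (star M2))) (oshK 0 K)))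
     else
       cps M1 (KLam (cps (oshift 0 M2)
                       (KLam (QT (TApp (WVar 1) (WVar 0)) (oshK 0 (oshK 0 K)))))))"
| "cps (Where L M) K = cps M (KLam (cps L (oshK 0 K)))"
| "cps (Mu J) K = QT (TLam (cpsJ J)) K"
| "cpsJ (Jmp k M) = cps M (KVar k)"
| "cpsJ (JWhere J M) = cps M (KLam (cpsJ J))"
| "star (Var x) = WVar x"
| "star (Lam M) = WLam (TLam (cps (kshift 0 M) (KVar 0)))"
| "star (App M N) = undefined"
| "star (Where M N) = undefined"
| "star (Mu J) = undefined"
  by pat_completeness auto
termination
  by (relation "measure (case_sum (\<lambda>(M, K). 2 * size M + 1) (case_sum (\<lambda>J. 2 * size J + 1) (\<lambda>V. 2 * size V)))") auto

definition cps_top :: "trm \<Rightarrow> tT" where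
  "cps_top M = TLam (cps (kshift 0 M) (KVar 0))"

primrec invT :: "tT \<Rightarrow> trm" and invQ :: "tQ \<Rightarrow> jmp"
  and invW :: "tW \<Rightarrow> trm" and fillK :: "tK \<Rightarrow> trm \<Rightarrow> jmp" where
  "invT (TLam Q) = Mu (invQ Q)"
| "invT (TApp W1 W2) = App (invW W1) (invW W2)"
| "invQ (QK K W) = fillK K (invW W)"
| "invQ (QT T K) = fillK K (invT T)"
| "invW (WVar x) = Var x"
| "invW (WLam T) = Lam (invT T)"
| "fillK (KVar k) M = Jmp k M"
| "fillK (KLam Q) M = JWhere (invQ Q) M"

end

theory Submission
  imports Defs
begin

text \<open>By simultaneous induction along the CPS translation one shows
  \<open>\<langle>M\<rangle>[K]\<inverse> =\<^sub>c\<^sub>c\<^sub>v K\<inverse>[M]\<close>, \<open>\<langle>J\<rangle>\<inverse> =\<^sub>c\<^sub>c\<^sub>v J\<close> and \<open>(V\<^sup>*)\<inverse> =\<^sub>c\<^sub>c\<^sub>v V\<close>.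
  Each clause of the translation is undone by reading a rule of the calculus backwards:
  (E3), respectively (E1), moves the \<open>where\<close> introduced by a continuation \<open>\<lambda>x.Q\<close> out of the hole,
  the naming rules \<open>NM \<rightarrow> (zM where z:=N)\<close> and \<open>VN \<rightarrow> (Vz where z:=N)\<close> remove the names introduced
  for non-values, and \<open>\<mu>k.[k]M \<rightarrow> M\<close> removes the \<open>\<lambda>k\<close> of the top level and of \<open>(\<lambda>x.M)\<^sup>*\<close>.
  Since the induction also pushes already translated terms under new \<open>where\<close>-binders, the
  statement is proved for the closure of \<open>=\<^sub>c\<^sub>c\<^sub>v\<close> under arbitrary sequences of index shifts.\<close>

lemma oshift_commute:
  "d \<le> c \<Longrightarrow> oshift (Suc c) (oshift d M) = oshift d (oshift c M)"
  "d \<le> c \<Longrightarrow> oshiftJ (Suc c) (oshiftJ d J) = oshiftJ d (oshiftJ c J)"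
  by (induction M and J arbitrary: c d and c d) auto

lemma oshift_kshift_commute:
  "oshift c (kshift d M) = kshift d (oshift c M)"
  "oshiftJ c (kshiftJ d J) = kshiftJ d (oshiftJ c J)"
  by (induction M and J arbitrary: c d and c d) auto

lemma is_val_oshift: "is_val (oshift c M) = is_val M"
  by (cases M) auto

lemma inv_oshift_commute:
  "invT (oshT c T) = oshift c (invT T)"
  "invQ (oshQ c Q) = oshiftJ c (invQ Q)"
  "invW (oshW c W) = oshift c (invW W)"
  "\<And>M. fillK (oshK c K) (oshift c M) = oshiftJ c (fillK K M)"
  by (induction T and Q and W and K arbitrary: c and c and c and c) auto

lemma fold_oshift_simps [simp]:
  "fold oshift cs (Lam M) = Lam (fold oshift (map Suc cs) M)"
  "fold oshift cs (App M N) = App (fold oshift cs M) (fold oshift cs N)"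
  "fold oshift cs (Where M N) = Where (fold oshift (map Suc cs) M) (fold oshift cs N)"
  "fold oshift cs (Mu J) = Mu (fold oshiftJ cs J)"
  "fold oshiftJ cs (Jmp k M) = Jmp k (fold oshift cs M)"
  "fold oshiftJ cs (JWhere J M) = JWhere (fold oshiftJ (map Suc cs) J) (fold oshift cs M)"
  by (induction cs arbitrary: M N J) auto

lemma is_val_fold_oshift: "is_val (fold oshift cs M) = is_val M"
  by (induction cs arbitrary: M) (auto simp: is_val_oshift)

lemma fold_oshift_Var0: "fold oshift (map Suc cs) (Var 0) = Var 0"
  by (induction cs) auto

lemma fold_oshift_oshift0: "fold oshift (map Suc cs) (oshift 0 M) = oshift 0 (fold oshift cs M)"
  by (induction cs arbitrary: M) (auto simp: oshift_commute)

lemma fold_oshiftJ_oshiftJ1: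
  "fold oshiftJ (map (Suc \<circ> Suc) cs) (oshiftJ (Suc 0) J) = oshiftJ (Suc 0) (fold oshiftJ (map Suc cs) J)"
  by (induction cs arbitrary: J) (auto simp: oshift_commute)

lemma fold_oshift_kshift0: "fold oshift cs (kshift 0 M) = kshift 0 (fold oshift cs M)"
  by (induction cs arbitrary: M) (auto simp: oshift_kshift_commute)

definition sccv :: "trm \<Rightarrow> trm \<Rightarrow> bool" where
  "sccv M N \<longleftrightarrow> (\<forall>cs. ccv (fold oshift cs M) (fold oshift cs N))"

definition sccvJ :: "jmp \<Rightarrow> jmp \<Rightarrow> bool" where
  "sccvJ J J' \<longleftrightarrow> (\<forall>cs. ccvJ (fold oshiftJ cs J) (fold oshiftJ cs J'))"

lemma sccv_imp_ccv: "sccv M N \<Longrightarrow> ccv M N"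
  unfolding sccv_def by (metis fold_simps(1))

lemma sccv_refl: "sccv M M" and sccvJ_refl: "sccvJ J J"
  by (auto simp: sccv_def sccvJ_def intro: ccv_ccvJ.intros)

lemma sccv_sym: "sccv M N \<Longrightarrow> sccv N M" and sccvJ_sym: "sccvJ J J' \<Longrightarrow> sccvJ J' J"
  by (auto simp: sccv_def sccvJ_def intro: ccv_ccvJ.intros)

lemma sccv_trans: "sccv M N \<Longrightarrow> sccv N P \<Longrightarrow> sccv M P"
  and sccvJ_trans: "sccvJ J J' \<Longrightarrow> sccvJ J' J'' \<Longrightarrow> sccvJ J J''"
  by (auto simp: sccv_def sccvJ_def intro: ccv_ccvJ.intros)

lemma sccv_Lam: "sccv M M' \<Longrightarrow> sccv (Lam M) (Lam M')"
  and sccv_App: "sccv M M' \<Longrightarrow> sccv N N' \<Longrightarrow> sccv (App M N) (App M' N')"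
  and sccv_Mu: "sccvJ J J' \<Longrightarrow> sccv (Mu J) (Mu J')"
  and sccvJ_Jmp: "sccv M M' \<Longrightarrow> sccvJ (Jmp k M) (Jmp k M')"
  and sccvJ_JWhere: "sccvJ J J' \<Longrightarrow> sccv M M' \<Longrightarrow> sccvJ (JWhere J M) (JWhere J' M')"
  by (auto simp: sccv_def sccvJ_def intro: ccv_ccvJ.intros)

lemma sccv_oshift: "sccv M M' \<Longrightarrow> sccv (oshift c M) (oshift c M')"
  unfolding sccv_def by (metis fold_simps(2))

lemma sccvJ_fillK: "sccv M M' \<Longrightarrow> sccvJ (fillK K M) (fillK K M')"
  by (cases K) (auto intro: sccvJ_Jmp sccvJ_JWhere sccvJ_refl)

lemma sccvJ_E3: "sccvJ (Jmp k (Where L M)) (JWhere (Jmp k L) M)"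
  by (auto simp: sccvJ_def intro: ccv_ccvJ.intros)

lemma sccvJ_E1: "sccvJ (JWhere J (Where L M)) (JWhere (JWhere (oshiftJ 1 J) L) M)"
  unfolding sccvJ_def
proof
  fix cs
  show "ccvJ (fold oshiftJ cs (JWhere J (Where L M)))
             (fold oshiftJ cs (JWhere (JWhere (oshiftJ 1 J) L) M))"
    using E1J[of "fold oshiftJ (map Suc cs) J" "fold oshift (map Suc cs) L" "fold oshift cs M"]
    by (simp add: fold_oshiftJ_oshiftJ1)
qed

lemma sccv_name_arg:
  "is_val V \<Longrightarrow> \<not> is_val N \<Longrightarrow> sccv (App V N) (Where (App (oshift 0 V) (Var 0)) N)"
  unfolding sccv_def
  by (auto simp: fold_oshift_oshift0 fold_oshift_Var0 is_val_fold_oshift intro: r_VN)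

lemma sccv_name_fun:
  "\<not> is_val N \<Longrightarrow> sccv (App N M) (Where (App (Var 0) (oshift 0 M)) N)"
  unfolding sccv_def
  by (auto simp: fold_oshift_oshift0 fold_oshift_Var0 is_val_fold_oshift intro: r_NM)

lemma sccv_Mu_Jmp: "sccv (Mu (Jmp 0 (kshift 0 M))) M"
  unfolding sccv_def by (auto simp: fold_oshift_kshift0 intro: r_muJmp)

lemma sccvJ_fillK_Where: "sccvJ (JWhere (fillK (oshK 0 K) L) M) (fillK K (Where L M))"
proof (cases K)
  case KVar
  then show ?thesis by (auto intro: sccvJ_sym sccvJ_E3)
next
  case (KLam Q)
  then show ?thesis
    using sccvJ_sym[OF sccvJ_E1[of "invQ Q" L M]] by (simp add: inv_oshift_commute)
qed

lemma sccvJ_JWhere_fillK: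
  "sccv (Where L N) M \<Longrightarrow> sccvJ (JWhere (fillK (oshK 0 K) L) N) (fillK K M)"
  by (meson sccvJ_fillK sccvJ_fillK_Where sccvJ_trans)

lemma sccv_inv_cps:
  "sccvJ (invQ (cps M K)) (fillK K M)"
  "sccvJ (invQ (cpsJ J)) J"
  "is_val V \<Longrightarrow> sccv (invW (star V)) V"
proof (induction M K and J and V rule: cps_cpsJ_star.induct)
  case (2 M K)
  then show ?case using sccvJ_fillK by simp
next
  case (3 M1 M2 K)
  consider "is_val M1" "is_val M2" | "is_val M1" "\<not> is_val M2"
    | "\<not> is_val M1" "is_val M2" | "\<not> is_val M1" "\<not> is_val M2"
    by blast
  then show ?case
  proof cases
    case 1
    then show ?thesis using "3.IH"(1,2) by (simp add: sccvJ_fillK sccv_App)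
  next
    case 2
    let ?L = "App (oshift 0 M1) (Var 0)"
    have "sccv (Where ?L M2) (App M1 M2)"
      using 2 sccv_name_arg sccv_sym by blast
    then have "sccvJ (JWhere (fillK (oshK 0 K) ?L) M2) (fillK K (App M1 M2))"
      by (rule sccvJ_JWhere_fillK)
    moreover have "sccv (invW (star M1)) M1"
      using "3.IH"(3) 2 by simp
    ultimately show ?thesis
      using "3.IH"(4) 2
      by (simp add: inv_oshift_commute)
        (meson sccvJ_JWhere sccvJ_fillK sccv_App sccv_oshift sccv_refl sccvJ_trans)
  next
    case 3
    let ?L = "App (Var 0) (oshift 0 M2)"
    have "sccv (Where ?L M1) (App M1 M2)"
      using 3 sccv_name_fun sccv_sym by blast
    then have "sccvJ (JWhere (fillK (oshK 0 K) ?L) M1) (fillK K (App M1 M2))"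
      by (rule sccvJ_JWhere_fillK)
    moreover have "sccv (invW (star M2)) M2"
      using "3.IH"(5) 3 by simp
    ultimately show ?thesis
      using "3.IH"(6) 3
      by (simp add: inv_oshift_commute)
        (meson sccvJ_JWhere sccvJ_fillK sccv_App sccv_oshift sccv_refl sccvJ_trans)
  next
    case 4
    let ?K2 = "KLam (QT (TApp (WVar 1) (WVar 0)) (oshK 0 (oshK 0 K)))"
    have "sccv (Where (App (Var 1) (Var 0)) (oshift 0 M2)) (App (Var 0) (oshift 0 M2))"
      using sccv_name_arg[of "Var 0" "oshift 0 M2"] 4 by (simp add: is_val_oshift sccv_sym)
    then have "sccvJ (invQ (cps (oshift 0 M2) ?K2)) (fillK (oshK 0 K) (App (Var 0) (oshift 0 M2)))"
      using "3.IH"(7) 4 sccvJ_JWhere_fillK sccvJ_trans by fastforce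
    moreover have "sccv (Where (App (Var 0) (oshift 0 M2)) M1) (App M1 M2)"
      using 4 sccv_name_fun sccv_sym by blast
    ultimately show ?thesis
      using "3.IH"(8) 4
      by simp (meson sccvJ_JWhere sccvJ_JWhere_fillK sccv_refl sccvJ_trans)
  qed
next
  case (4 L M K)
  then show ?case
    by simp (meson sccvJ_JWhere sccvJ_fillK_Where sccv_refl sccvJ_trans)
next
  case (7 J M)
  then show ?case by simp (meson sccvJ_JWhere sccv_refl sccvJ_trans)
next
  case (9 M)
  then show ?case by simp (meson sccv_Lam sccv_Mu sccv_Mu_Jmp sccv_trans)
qed (auto simp: sccvJ_refl sccv_refl sccvJ_fillK sccv_Mu)

theorem corollary1p26:
  fixes M :: trm
  shows "ccv (invT (cps_top M)) M"
proof -
  have "sccv (invT (cps_top M)) (Mu (Jmp 0 (kshift 0 M)))"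
    using sccv_inv_cps(1)[of "kshift 0 M" "KVar 0"] by (simp add: cps_top_def sccv_Mu)
  then show ?thesis
    using sccv_Mu_Jmp sccv_trans sccv_imp_ccv by blast
qed

end
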